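(* Let $n\ge 2$, $L>0$, $T>0$, let $b_{ij}$ ($i\neq j$) be real numbers, and let $P=(P_1,\dots,P_n)$, $V=(V_1,\dots,V_n)$ with $P_i,V_i\in C^3([0,T]\times\mathbb T_L)$, $\mathbb T_L=\mathbb R/L\mathbb Z$, be a solution of $$\partial_tP_i+\partial_x(P_iV_i)=0,\qquad -\sum_{j=1}^nb_{ij}P_j(V_i-V_j)=\partial_x\log P_i-\frac{1}{\sum_{j=1}^nP_j}\sum_{j=1}^nP_j\partial_x\log P_j,\qquad \sum_{j=1}^nP_jV_j=0,$$ $i=1,\dots,n$, with $P_i(x,t)>0$ for all $x,t$ and $i$, and with $\sum_{j=1}^nP_j(x,0)=1$ for all $x$. For $N\ge1$, $h=L/N$, $\Delta t>0$ and $k\ge0$ with $(k+1)\Delta t\le T$, set $P^k_{i,\ell}=P_i(\ell h,k\Delta t)$ (cell-centered) and $V^{k}_{i,\ell+\frac12}=V_i((\ell+\frac12)h,k\Delta t)$ (edge-centered), and define the local truncation errors $$\tau^1_{i,\ell}=\frac{P^{k+1}_{i,\ell}-P^k_{i,\ell}}{\Delta t}+\big(d_h(\hat P^k_iV^{k+1}_i)\big)_\ell,$$ $$\tau^2_{i,\ell+\frac12}=\Big(D_h\log P^{k+1}_i-\frac{1}{\sum_{j=1}^n\hat P^k_j}\sum_{j=1}^n\hat P^k_jD_h\log P^{k+1}_j+\sum_{j=1}^nb_{ij}\hat P^k_j(V^{k+1}_i-V^{k+1}_j)\Big)_{\ell+\frac12},$$ $$\tau^3_{\ell+\frac12}=\sum_{i=1}^n\hat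 P^k_{i,\ell+\frac12}V^{k+1}_{i,\ell+\frac12}.$$ Then there is a constant $C>0$ depending on $(P,V)$ (but not on $h$, $\Delta t$, $k$, $i$, $\ell$) such that $$|\tau^1_{i,\ell}|,\ |\tau^2_{i,\ell+\frac12}|,\ |\tau^3_{\ell+\frac12}|\le C(\Delta t+h^2).$$
   Context: Difference operators on $N$-periodic grids: for edge-centered $\phi$, $(d_h\phi)_\ell=(\phi_{\ell+\frac12}-\phi_{\ell-\frac12})/h$; for cell-centered $f$, $(D_hf)_{\ell+\frac12}=(f_{\ell+1}-f_\ell)/h$ and $\hat f_{\ell+\frac12}=(f_\ell+f_{\ell+1})/2$. Products and logarithms are pointwise. *)

theory Defs
  imports "HOL-Analysis.Analysis"
begin

text \<open>Functions of (x,t) are represented as maps real \<times> real \<Rightarrow> real on the domain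
  S = \<real> \<times> [0,T]; periodicity in x with period L encodes the torus.\<close>

definition dom_T :: "real \<Rightarrow> (real \<times> real) set" where
  "dom_T T = UNIV \<times> {0..T}"

text \<open>Partial derivatives (within S, i.e. one-sided at t = 0 and t = T).\<close>
definition pdx :: "(real \<times> real) set \<Rightarrow> (real \<times> real \<Rightarrow> real) \<Rightarrow> real \<times> real \<Rightarrow> real" where
  "pdx S f z = frechet_derivative f (at z within S) (1, 0)"

definition pdt :: "(real \<times> real) set \<Rightarrow> (real \<times> real \<Rightarrow> real) \<Rightarrow> real \<times> real \<Rightarrow> real" where
  "pdt S f z = frechet_derivative f (at z within S) (0, 1)"

fun Ck_on :: "nat \<Rightarrow> (real \<times> real) set \<Rightarrow> (real \<times> real \<Rightarrow> real) \<Rightarrow> bool" where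
  "Ck_on 0 S f = continuous_on S f"
| "Ck_on (Suc k) S f = (continuous_on S f \<and> (\<forall>z\<in>S. f differentiable (at z within S))
      \<and> Ck_on k S (pdx S f) \<and> Ck_on k S (pdt S f))"

definition x_periodic :: "real \<Rightarrow> (real \<times> real \<Rightarrow> real) \<Rightarrow> bool" where
  "x_periodic L f = (\<forall>x t. f (x + L, t) = f (x, t))"

text \<open>Grid quantities. Cell-centered index l means position l*h; edge index l means
  position (l+1/2)*h (i.e. edge l+1/2). Indices i,j range over {0..<n}.\<close>

definition Pgrid :: "(nat \<Rightarrow> real \<times> real \<Rightarrow> real) \<Rightarrow> real \<Rightarrow> real \<Rightarrow> nat \<Rightarrow> nat \<Rightarrow> int \<Rightarrow> real" where
  "Pgrid P h dt k i l = P i (real_of_int l * h, real k * dt)"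

definition Vgrid :: "(nat \<Rightarrow> real \<times> real \<Rightarrow> real) \<Rightarrow> real \<Rightarrow> real \<Rightarrow> nat \<Rightarrow> nat \<Rightarrow> int \<Rightarrow> real" where
  "Vgrid V h dt k i l = V i ((real_of_int l + 1/2) * h, real k * dt)"

definition hatP :: "(nat \<Rightarrow> real \<times> real \<Rightarrow> real) \<Rightarrow> real \<Rightarrow> real \<Rightarrow> nat \<Rightarrow> nat \<Rightarrow> int \<Rightarrow> real" where
  "hatP P h dt k i l = (Pgrid P h dt k i l + Pgrid P h dt k i (l + 1)) / 2"

definition DlogP :: "(nat \<Rightarrow> real \<times> real \<Rightarrow> real) \<Rightarrow> real \<Rightarrow> real \<Rightarrow> nat \<Rightarrow> nat \<Rightarrow> int \<Rightarrow> real" where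
  "DlogP P h dt k i l = (ln (Pgrid P h dt (k+1) i (l + 1)) - ln (Pgrid P h dt (k+1) i l)) / h"

definition tau1 :: "(nat \<Rightarrow> real \<times> real \<Rightarrow> real) \<Rightarrow> (nat \<Rightarrow> real \<times> real \<Rightarrow> real) \<Rightarrow>
    real \<Rightarrow> real \<Rightarrow> nat \<Rightarrow> nat \<Rightarrow> int \<Rightarrow> real" where
  "tau1 P V h dt k i l =
     (Pgrid P h dt (k+1) i l - Pgrid P h dt k i l) / dt
     + (hatP P h dt k i l * Vgrid V h dt (k+1) i l
        - hatP P h dt k i (l - 1) * Vgrid V h dt (k+1) i (l - 1)) / h"

definition tau2 :: "nat \<Rightarrow> (nat \<Rightarrow> nat \<Rightarrow> real) \<Rightarrow> (nat \<Rightarrow> real \<times> real \<Rightarrow> real) \<Rightarrow>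
    (nat \<Rightarrow> real \<times> real \<Rightarrow> real) \<Rightarrow> real \<Rightarrow> real \<Rightarrow> nat \<Rightarrow> nat \<Rightarrow> int \<Rightarrow> real" where
  "tau2 n b P V h dt k i l =
     DlogP P h dt k i l
     - (1 / (\<Sum>j<n. hatP P h dt k j l)) * (\<Sum>j<n. hatP P h dt k j l * DlogP P h dt k j l)
     + (\<Sum>j<n. b i j * hatP P h dt k j l * (Vgrid V h dt (k+1) i l - Vgrid V h dt (k+1) j l))"

definition tau3 :: "nat \<Rightarrow> (nat \<Rightarrow> real \<times> real \<Rightarrow> real) \<Rightarrow> (nat \<Rightarrow> real \<times> real \<Rightarrow> real) \<Rightarrow>
    real \<Rightarrow> real \<Rightarrow> nat \<Rightarrow> int \<Rightarrow> real" where
  "tau3 n P V h dt k l = (\<Sum>i<n. hatP P h dt k i l * Vgrid V h dt (k+1) i l)"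

end

theory Submission
  imports Defs "HOL-Library.Landau_Symbols"
begin

(* Consistency is a matter of Taylor expansion on the strip R x [0,T].  Every quantity of
   the scheme is sampled at a cell centre x = l h or at an edge x + h/2, and the exact
   equations are used at the same point at time t_k.  Averages (f(y - a) + f(y + a))/2 and
   centred differences (f(y + a) - f(y - a))/(2a) reproduce f(y) and f_x(y) up to O(a^2)
   (three x-derivatives suffice), and the lag between t_k and t_(k+1) in V^(k+1) and in
   D_h log P^(k+1) costs O(dt).  All derivatives involved, including those of log P, are
   continuous and L-periodic, hence bounded on the strip, so sums, products and the
   quotient by the total density inherit these errors, and the exact equations cancel the
   leading terms. *)

lemma bigo_mult_diff:
  fixes a b c d :: "'a \<Rightarrow> real"
  assumes "(\<lambda>p. a p - c p) \<in> O[F](g)" and "(\<lambda>p. b p - d p) \<in> O[F](g)"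
    and "a \<in> O[F](\<lambda>_. 1)" and "d \<in> O[F](\<lambda>_. 1)"
  shows "(\<lambda>p. a p * b p - c p * d p) \<in> O[F](g)"
proof -
  have "(\<lambda>p. (b p - d p) * a p + (a p - c p) * d p) \<in> O[F](g)"
    by (rule sum_in_bigo(1)[OF landau_o.big_1_mult[OF assms(2,3)] landau_o.big_1_mult[OF assms(1,4)]])
  then show ?thesis by (simp add: algebra_simps)
qed

lemma bigo_inverse_diff:
  fixes a c :: "'a \<Rightarrow> real"
  assumes "(\<lambda>p. a p - c p) \<in> O[F](g)"
    and "(\<lambda>p. 1 / a p) \<in> O[F](\<lambda>_. 1)" and "(\<lambda>p. 1 / c p) \<in> O[F](\<lambda>_. 1)"
    and "\<forall>\<^sub>F p in F. a p \<noteq> 0 \<and> c p \<noteq> 0"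
  shows "(\<lambda>p. 1 / a p - 1 / c p) \<in> O[F](g)"
proof -
  have "(\<lambda>p. c p - a p) \<in> O[F](g)"
    using assms(1) by (subst landau_o.big.uminus_in_iff[symmetric]) simp
  then have "(\<lambda>p. (c p - a p) * (1 / a p) * (1 / c p)) \<in> O[F](g)"
    using assms(2,3) by (intro landau_o.big_1_mult)
  then show ?thesis
    by (rule landau_o.big.in_cong[THEN iffD1, rotated])
      (use assms(4) in \<open>auto elim!: eventually_mono simp: field_simps\<close>)
qed

lemma bigo_1_of_approx:
  assumes "(\<lambda>p. f p - g p) \<in> O[F](e)" and "g \<in> O[F](\<lambda>_. 1)" and "e \<in> O[F](\<lambda>_. 1)"
  shows "f \<in> O[F](\<lambda>_. 1)"
  using sum_in_bigo(1)[OF landau_o.big_trans[OF assms(1,3)] assms(2)] by simp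

lemma const_in_bigo_1: "(\<lambda>_. c) \<in> O[F](\<lambda>_. 1 :: real)"
  by (intro bigoI[where c = "\<bar>c\<bar>"]) simp

section \<open>Partial derivatives on the strip\<close>

(* For T > 0 the strip has interior points in every direction from each of its points, so
   derivatives within it are unique, also on the boundary lines t = 0 and t = T. *)
lemma frechet_derivative_dom_T:
  assumes "T > 0" and z: "z \<in> dom_T T" and D: "(f has_derivative D) (at z within dom_T T)"
  shows "frechet_derivative f (at z within dom_T T) = D"
proof -
  obtain x t where zt: "z = (x, t)" by (cases z)
  define C where "C = cbox (x - 1, 0) (x + 1, T)"
  have C: "z \<in> C" "C \<subseteq> dom_T T"
    using z by (auto simp: C_def dom_T_def zt)
  have "(f has_derivative frechet_derivative f (at z within dom_T T)) (at z within dom_T T)"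
    using D frechet_derivative_works by (auto simp: differentiable_def)
  then show ?thesis
    using \<open>T > 0\<close> C D unfolding C_def
    by (intro frechet_derivative_unique_within_closed_interval[of "(x - 1, 0)" "(x + 1, T)" z f])
      (auto simp: Basis_prod_def intro: has_derivative_subset)
qed

lemma pdx_mult:
  assumes "T > 0" and z: "z \<in> dom_T T"
    and "f differentiable (at z within dom_T T)" and "g differentiable (at z within dom_T T)"
  shows "pdx (dom_T T) (\<lambda>w. f w * g w) z = f z * pdx (dom_T T) g z + pdx (dom_T T) f z * g z"
  using frechet_derivative_dom_T[OF \<open>T > 0\<close> z
      has_derivative_mult[OF assms(3,4)[unfolded frechet_derivative_works]]]
  by (simp add: pdx_def)

lemma has_real_derivative_along_line:
  assumes f: "(f has_derivative D) (at (\<gamma> u) within S)"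
    and \<gamma>: "(\<gamma> has_derivative (\<lambda>s. s *\<^sub>R v)) (at u within U)" and "\<gamma> ` U \<subseteq> S"
  shows "((\<lambda>s. f (\<gamma> s)) has_real_derivative D v) (at u within U)"
proof -
  have "((f \<circ> \<gamma>) has_derivative (D \<circ> (\<lambda>s. s *\<^sub>R v))) (at u within U)"
    using diff_chain_within[OF \<gamma> has_derivative_subset[OF f \<open>\<gamma> ` U \<subseteq> S\<close>]] .
  moreover have "D \<circ> (\<lambda>s. s *\<^sub>R v) = (*) (D v)"
    using linear_scale[OF has_derivative_linear[OF f]] by (auto simp: fun_eq_iff)
  ultimately show ?thesis
    by (simp add: has_field_derivative_def o_def)
qed

lemma pdx_has_real_derivative:
  assumes "f differentiable (at (s, t) within dom_T T)" and "t \<in> {0..T}"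
  shows "((\<lambda>s. f (s, t)) has_real_derivative pdx (dom_T T) f (s, t)) (at s)"
  unfolding pdx_def
  by (rule has_real_derivative_along_line[where \<gamma> = "\<lambda>s. (s, t)" and U = UNIV])
    (use assms in \<open>auto simp: frechet_derivative_works dom_T_def intro!: derivative_eq_intros\<close>)

lemma pdt_has_real_derivative:
  assumes "f differentiable (at (x, t) within dom_T T)" and "t \<in> {0..T}"
  shows "((\<lambda>t. f (x, t)) has_real_derivative pdt (dom_T T) f (x, t)) (at t within {0..T})"
  unfolding pdt_def
  by (rule has_real_derivative_along_line[where \<gamma> = "\<lambda>t. (x, t)"])
    (use assms in \<open>auto simp: frechet_derivative_works dom_T_def intro!: derivative_eq_intros\<close>)

lemma x_periodic_int:
  assumes "x_periodic L f"
  shows "f (x + of_int m * L, t) = f (x, t)"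
proof (induction m rule: int_induct[where k = 0])
  case (step1 m)
  then show ?case
    using assms[unfolded x_periodic_def, rule_format, of "x + of_int m * L" t]
    by (simp add: algebra_simps)
next
  case (step2 m)
  then show ?case
    using assms[unfolded x_periodic_def, rule_format, of "x + of_int (m - 1) * L" t]
    by (simp add: algebra_simps)
qed simp

lemma bounded_on_dom_T:
  assumes "L > 0" and "continuous_on (dom_T T) f" and "x_periodic L f"
  obtains B where "\<And>z. z \<in> dom_T T \<Longrightarrow> \<bar>f z\<bar> \<le> B"
proof -
  let ?K = "{0..L} \<times> {0..T}"
  have "?K \<subseteq> dom_T T" by (auto simp: dom_T_def)
  then have "compact (f ` ?K)"
    by (intro compact_continuous_image compact_Times compact_Icc continuous_on_subset[OF assms(2)])
  then obtain B where "\<forall>y \<in> f ` ?K. norm y \<le> B"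
    by (meson bounded_iff compact_imp_bounded)
  then have B: "\<And>z. z \<in> ?K \<Longrightarrow> \<bar>f z\<bar> \<le> B" by auto
  have "\<bar>f z\<bar> \<le> B" if "z \<in> dom_T T" for z
  proof -
    obtain x t where z: "z = (x, t)" by (cases z)
    with that have t: "t \<in> {0..T}" by (simp add: dom_T_def)
    define m where "m = \<lfloor>x / L\<rfloor>"
    have "x - of_int m * L \<in> {0..L}"
      using \<open>L > 0\<close> floor_divide_lower[of L x] floor_divide_upper[of L x]
      by (auto simp: m_def algebra_simps)
    then have "\<bar>f (x - of_int m * L, t)\<bar> \<le> B" using B t by auto
    then show ?thesis
      using x_periodic_int[OF assms(3), of "x - of_int m * L" m t] z by simp
  qed
  then show ?thesis by (rule that)
qed

lemma frechet_derivative_x_shift: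
  assumes per: "x_periodic L f"
  shows "frechet_derivative f (at (x + L, t) within dom_T T)
       = frechet_derivative f (at (x, t) within dom_T T)"
proof -
  have invariant: "f (w + (c, 0)) = f w" if "c = L \<or> c = - L" for w c
  proof (cases w)
    case (Pair a b)
    have "f (a + L, b) = f (a, b)" "f (a - L + L, b) = f (a - L, b)"
      using per unfolding x_periodic_def by blast+
    then show ?thesis using that Pair by auto
  qed
  have shift: "(f has_derivative D) (at z within dom_T T)"
    if "(f has_derivative D) (at (z + (c, 0)) within dom_T T)" "c = L \<or> c = - L" for z c D
  proof -
    have "(\<lambda>w. w + (c, 0)) ` dom_T T = dom_T T"
    proof
      show "dom_T T \<subseteq> (\<lambda>w. w + (c, 0)) ` dom_T T"
      proof
        fix w assume "w \<in> dom_T T"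
        then show "w \<in> (\<lambda>w. w + (c, 0)) ` dom_T T"
          by (intro image_eqI[of _ _ "w - (c, 0)"]) (auto simp: dom_T_def)
      qed
    qed (auto simp: dom_T_def)
    then have "((f \<circ> (\<lambda>w. w + (c, 0))) has_derivative D \<circ> id) (at z within dom_T T)"
      using that(1) by (intro diff_chain_within) (auto intro!: derivative_eq_intros simp: id_def)
    then show ?thesis using invariant[OF that(2)] by (simp add: o_def)
  qed
  have "(f has_derivative D) (at (x + L, t) within dom_T T) \<longleftrightarrow>
        (f has_derivative D) (at (x, t) within dom_T T)" for D
    using shift[of D "(x, t)" L] shift[of D "(x + L, t)" "- L"] by auto
  then show ?thesis by (simp add: frechet_derivative_def)
qed

lemma x_periodic_pdx: "x_periodic L f \<Longrightarrow> x_periodic L (pdx (dom_T T) f)"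
  and x_periodic_pdt: "x_periodic L f \<Longrightarrow> x_periodic L (pdt (dom_T T) f)"
  using frechet_derivative_x_shift[of L f] by (simp_all add: x_periodic_def pdx_def pdt_def)

lemma x_periodic_funpow_pdx: "x_periodic L f \<Longrightarrow> x_periodic L ((pdx (dom_T T) ^^ j) f)"
  and x_periodic_funpow_pdt: "x_periodic L f \<Longrightarrow> x_periodic L ((pdt (dom_T T) ^^ j) f)"
  by (induction j) (simp_all add: x_periodic_pdx x_periodic_pdt)

lemma Ck_on_Suc_D: "Ck_on (Suc k) S f \<Longrightarrow> Ck_on k S f"
proof (induction k arbitrary: f)
  case (Suc k)
  then show ?case
    using Ck_on.simps(2)[of "Suc k" S f] Ck_on.simps(2)[of k S f] by blast
qed simp

lemma Ck_on_mono: "Ck_on m S f \<Longrightarrow> k \<le> m \<Longrightarrow> Ck_on k S f"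
proof (induction m)
  case (Suc m)
  then show ?case by (metis Ck_on_Suc_D le_Suc_eq)
qed simp

lemma frechet_derivative_cong_within:
  assumes "z \<in> S" and "\<And>w. w \<in> S \<Longrightarrow> f w = g w"
  shows "frechet_derivative f (at z within S) = frechet_derivative g (at z within S)"
proof -
  have "(f has_derivative D) (at z within S) \<longleftrightarrow> (g has_derivative D) (at z within S)" for D
    using assms has_derivative_transform[of z S f g] has_derivative_transform[of z S g f] by auto
  then show ?thesis by (simp add: frechet_derivative_def)
qed

lemma Ck_on_cong: "Ck_on k S f \<Longrightarrow> (\<And>z. z \<in> S \<Longrightarrow> f z = g z) \<Longrightarrow> Ck_on k S g"
proof (induction k arbitrary: f g)
  case 0
  then show ?case using continuous_on_cong[of S S f g] by simp
next
  case (Suc k)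
  have "pdx S f z = pdx S g z" "pdt S f z = pdt S g z" if "z \<in> S" for z
    using frechet_derivative_cong_within[OF that Suc.prems(2)] by (simp_all add: pdx_def pdt_def)
  then have "Ck_on k S (pdx S g)" "Ck_on k S (pdt S g)"
    using Suc.prems(1) by (auto intro: Suc.IH)
  moreover have "g differentiable (at z within S)" if z: "z \<in> S" for z
  proof -
    obtain D where "(f has_derivative D) (at z within S)"
      using Suc.prems(1) z by (auto simp: differentiable_def)
    then have "(g has_derivative D) (at z within S)"
      using Suc.prems(2) z by (intro has_derivative_transform[of z S g f]) auto
    then show ?thesis by (rule differentiableI)
  qed
  moreover have "continuous_on S g"
    using Suc.prems continuous_on_cong[of S S f g] by simp
  ultimately show ?case by simp
qed

lemma Ck_on_SucI:
  assumes "T > 0" and "continuous_on (dom_T T) f"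
    and D: "\<And>z. z \<in> dom_T T \<Longrightarrow> (f has_derivative D z) (at z within dom_T T)"
    and "Ck_on k (dom_T T) (\<lambda>z. D z (1, 0))" and "Ck_on k (dom_T T) (\<lambda>z. D z (0, 1))"
  shows "Ck_on (Suc k) (dom_T T) f"
proof -
  have "pdx (dom_T T) f z = D z (1, 0)" "pdt (dom_T T) f z = D z (0, 1)" if "z \<in> dom_T T" for z
    using frechet_derivative_dom_T[OF \<open>T > 0\<close> that D[OF that]] by (simp_all add: pdx_def pdt_def)
  then have "Ck_on k (dom_T T) (pdx (dom_T T) f)" "Ck_on k (dom_T T) (pdt (dom_T T) f)"
    using assms(4,5) by (auto intro: Ck_on_cong)
  moreover have "\<forall>z\<in>dom_T T. f differentiable (at z within dom_T T)"
    using D differentiableI by blast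
  ultimately show ?thesis
    using assms(2) by simp
qed

context
  fixes T :: real
  assumes T: "T > 0"
begin

private abbreviation (input) "S \<equiv> dom_T T"

private abbreviation (input) "Df f z \<equiv> frechet_derivative f (at z within S)"

private lemma has_frechet_derivative:
  "Ck_on (Suc k) S f \<Longrightarrow> z \<in> S \<Longrightarrow> (f has_derivative Df f z) (at z within S)"
  by (simp add: frechet_derivative_works)

lemma Ck_on_const: "Ck_on k S (\<lambda>z. c)"
proof (induction k arbitrary: c)
  case (Suc k)
  show ?case
    by (rule Ck_on_SucI[OF T, where D = "\<lambda>_ _. 0"])
      (simp_all only: Suc.IH continuous_on_const has_derivative_const)
qed simp

lemma Ck_on_add: "Ck_on k S f \<Longrightarrow> Ck_on k S g \<Longrightarrow> Ck_on k S (\<lambda>z. f z + g z)"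
proof (induction k arbitrary: f g)
  case (Suc k)
  note f = Suc.prems(1) and g = Suc.prems(2)
  show ?case
  proof (rule Ck_on_SucI[OF T, where D = "\<lambda>z v. Df f z v + Df g z v"])
    show "continuous_on S (\<lambda>z. f z + g z)"
      using f g by (simp add: continuous_on_add)
    show "((\<lambda>z. f z + g z) has_derivative (\<lambda>v. Df f z v + Df g z v)) (at z within S)"
      if "z \<in> S" for z
      using f g that by (intro has_derivative_add has_frechet_derivative)
  qed (use Suc f g in \<open>simp_all add: pdx_def[symmetric] pdt_def[symmetric]\<close>)
qed (simp add: continuous_on_add)

lemma Ck_on_mult: "Ck_on k S f \<Longrightarrow> Ck_on k S g \<Longrightarrow> Ck_on k S (\<lambda>z. f z * g z)"
proof (induction k arbitrary: f g)
  case (Suc k)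
  note f = Suc.prems(1) and g = Suc.prems(2)
  note f' = Ck_on_Suc_D[OF f] and g' = Ck_on_Suc_D[OF g]
  show ?case
  proof (rule Ck_on_SucI[OF T, where D = "\<lambda>z v. f z * Df g z v + Df f z v * g z"])
    show "continuous_on S (\<lambda>z. f z * g z)"
      using f g by (simp add: continuous_on_mult)
    show "((\<lambda>z. f z * g z) has_derivative (\<lambda>v. f z * Df g z v + Df f z v * g z)) (at z within S)"
      if "z \<in> S" for z
      using f g that by (intro has_derivative_mult has_frechet_derivative)
  qed (use Suc.IH f g f' g' in \<open>simp_all add: pdx_def[symmetric] pdt_def[symmetric] Ck_on_add\<close>)
qed (simp add: continuous_on_mult)

lemma Ck_on_inverse:
  "Ck_on k S g \<Longrightarrow> (\<And>z. z \<in> S \<Longrightarrow> g z \<noteq> 0) \<Longrightarrow> Ck_on k S (\<lambda>z. inverse (g z))"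
proof (induction k)
  case (Suc k)
  note g = Suc.prems(1) and g' = Ck_on_Suc_D[OF Suc.prems(1)]
  have inv: "Ck_on k S (\<lambda>z. inverse (g z))"
    using Suc.IH[OF g' Suc.prems(2)] .
  have neg: "Ck_on k S (\<lambda>z. - (inverse (g z) * d z * inverse (g z)))" if "Ck_on k S d" for d
    using Ck_on_mult[OF Ck_on_const[of k "-1"] Ck_on_mult[OF Ck_on_mult[OF inv that] inv]] by simp
  show ?case
  proof (rule Ck_on_SucI[OF T, where D = "\<lambda>z v. - (inverse (g z) * Df g z v * inverse (g z))"])
    show "continuous_on S (\<lambda>z. inverse (g z))"
      using g Suc.prems(2) by (simp add: continuous_on_inverse)
    show "((\<lambda>z. inverse (g z)) has_derivative (\<lambda>v. - (inverse (g z) * Df g z v * inverse (g z))))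
        (at z within S)" if "z \<in> S" for z
      by (rule Deriv.has_derivative_inverse[OF Suc.prems(2)[OF that] has_frechet_derivative[OF g that]])
  qed (use g neg in \<open>simp_all add: pdx_def[symmetric] pdt_def[symmetric]\<close>)
qed (simp add: continuous_on_inverse)

lemma Ck_on_ln:
  assumes f: "Ck_on k S f" and pos: "\<And>z. z \<in> S \<Longrightarrow> f z > 0"
  shows "Ck_on k S (\<lambda>z. ln (f z))"
proof -
  have cont: "continuous_on S (\<lambda>z. ln (f z))"
    using Ck_on_mono[OF f, of 0] pos by (intro continuous_on_ln) (auto simp: less_imp_neq[symmetric])
  show ?thesis
  proof (cases k)
    case (Suc j)
    have inv: "Ck_on j S (\<lambda>z. inverse (f z))"
      using Ck_on_inverse[OF Ck_on_Suc_D] f pos Suc by (metis less_irrefl)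
    show ?thesis unfolding Suc
    proof (rule Ck_on_SucI[OF T cont, where D = "\<lambda>z v. Df f z v * inverse (f z)"])
      show "((\<lambda>z. ln (f z)) has_derivative (\<lambda>v. Df f z v * inverse (f z))) (at z within S)"
        if "z \<in> S" for z
        using f that Suc
        by (intro has_derivative_ln[where g = f, OF pos[OF that]] has_frechet_derivative) auto
    qed (use f inv Suc in \<open>simp_all add: pdx_def[symmetric] pdt_def[symmetric] Ck_on_mult\<close>)
  qed (use cont in simp)
qed

end

lemma Ck_on_pdx: "Ck_on (Suc k) S f \<Longrightarrow> Ck_on k S (pdx S f)"
  by simp

lemma Ck_on_funpow_pdx: "Ck_on (j + k) S f \<Longrightarrow> Ck_on k S ((pdx S ^^ j) f)"
proof (induction j arbitrary: k)
  case (Suc j)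
  then have "Ck_on (Suc k) S ((pdx S ^^ j) f)"
    using Suc.IH[of "Suc k"] by (simp del: Ck_on.simps)
  then show ?case by simp
qed simp

lemma Ck_on_funpow_pdt: "Ck_on (j + k) S f \<Longrightarrow> Ck_on k S ((pdt S ^^ j) f)"
proof (induction j arbitrary: k)
  case (Suc j)
  then have "Ck_on (Suc k) S ((pdt S ^^ j) f)"
    using Suc.IH[of "Suc k"] by (simp del: Ck_on.simps)
  then show ?case by simp
qed simp

section \<open>Taylor expansion on the strip\<close>

lemma x_taylor_bound:
  assumes "L > 0" and f: "Ck_on (Suc m) (dom_T T) f" and per: "x_periodic L f"
  obtains B where "\<And>x a t. t \<in> {0..T} \<Longrightarrow>
    \<bar>f (x + a, t) - (\<Sum>i\<le>m. (pdx (dom_T T) ^^ i) f (x, t) * a ^ i / fact i)\<bar> \<le> B * \<bar>a\<bar> ^ Suc m"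
proof -
  let ?d = "\<lambda>i. (pdx (dom_T T) ^^ i) f"
  have "continuous_on (dom_T T) (?d (Suc m))"
    using Ck_on_funpow_pdx[of "Suc m" 0] f by simp
  then obtain B where B: "\<And>z. z \<in> dom_T T \<Longrightarrow> \<bar>?d (Suc m) z\<bar> \<le> B"
    using bounded_on_dom_T[OF \<open>L > 0\<close> _ x_periodic_funpow_pdx[OF per]] by blast
  have "\<bar>f (x + a, t) - (\<Sum>i\<le>m. ?d i (x, t) * a ^ i / fact i)\<bar> \<le> B / fact m * \<bar>a\<bar> ^ Suc m"
    if t: "t \<in> {0..T}" for x a t
  proof -
    have "((\<lambda>s. ?d i (s, t)) has_real_derivative ?d (Suc i) (s, t)) (at s within UNIV)" if "i \<le> m" for i s
    proof -
      have "Ck_on (Suc 0) (dom_T T) (?d i)"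
        using Ck_on_funpow_pdx[of i "Suc 0"] Ck_on_mono[OF f, of "i + Suc 0"] that by simp
      then show ?thesis
        using pdx_has_real_derivative[OF _ t] t by (simp add: dom_T_def)
    qed
    then show ?thesis
      using field_Taylor[of UNIV m "\<lambda>i s. ?d i (s, t)" B x "x + a"] B t
      by (simp add: dom_T_def)
  qed
  then show ?thesis by (rule that)
qed

lemma t_taylor_bound:
  assumes "L > 0" and f: "Ck_on (Suc m) (dom_T T) f" and per: "x_periodic L f"
  obtains B where "\<And>x t s. t \<in> {0..T} \<Longrightarrow> s \<in> {0..T} \<Longrightarrow>
    \<bar>f (x, s) - (\<Sum>i\<le>m. (pdt (dom_T T) ^^ i) f (x, t) * (s - t) ^ i / fact i)\<bar> \<le> B * \<bar>s - t\<bar> ^ Suc m"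
proof -
  let ?d = "\<lambda>i. (pdt (dom_T T) ^^ i) f"
  have "continuous_on (dom_T T) (?d (Suc m))"
    using Ck_on_funpow_pdt[of "Suc m" 0] f by simp
  then obtain B where B: "\<And>z. z \<in> dom_T T \<Longrightarrow> \<bar>?d (Suc m) z\<bar> \<le> B"
    using bounded_on_dom_T[OF \<open>L > 0\<close> _ x_periodic_funpow_pdt[OF per]] by blast
  have "\<bar>f (x, s) - (\<Sum>i\<le>m. ?d i (x, t) * (s - t) ^ i / fact i)\<bar> \<le> B / fact m * \<bar>s - t\<bar> ^ Suc m"
    if "t \<in> {0..T}" "s \<in> {0..T}" for x t s
  proof -
    have "((\<lambda>t. ?d i (x, t)) has_real_derivative ?d (Suc i) (x, t)) (at t within {0..T})"
      if "i \<le> m" "t \<in> {0..T}" for i t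
    proof -
      have "Ck_on (Suc 0) (dom_T T) (?d i)"
        using Ck_on_funpow_pdt[of i "Suc 0"] Ck_on_mono[OF f, of "i + Suc 0"] that by simp
      then show ?thesis
        using pdt_has_real_derivative[OF _ that(2)] that by (simp add: dom_T_def)
    qed
    then show ?thesis
      using field_Taylor[of "{0..T}" m "\<lambda>i t. ?d i (x, t)" B t s] B that
      by (simp add: dom_T_def)
  qed
  then show ?thesis by (rule that)
qed

lemma bigo_1_on_dom_T:
  assumes "L > 0" and "Ck_on m (dom_T T) f" and "x_periodic L f"
    and "\<forall>\<^sub>F p in F. \<tau> p \<in> {0..T}"
  shows "(\<lambda>p. f (\<xi> p, \<tau> p)) \<in> O[F](\<lambda>_. 1)"
proof -
  obtain B where "\<And>z. z \<in> dom_T T \<Longrightarrow> \<bar>f z\<bar> \<le> B"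
    using bounded_on_dom_T[OF assms(1) _ assms(3)] Ck_on_mono[OF assms(2), of 0] by auto
  then show ?thesis
    using assms(4) by (intro bigoI[where c = B]) (auto elim!: eventually_mono simp: dom_T_def)
qed

lemma average_bigo:
  assumes "L > 0" and "Ck_on 2 (dom_T T) f" and "x_periodic L f"
    and "\<forall>\<^sub>F p in F. \<tau> p \<in> {0..T}"
  shows "(\<lambda>p. (f (\<xi> p - a p, \<tau> p) + f (\<xi> p + a p, \<tau> p)) / 2 - f (\<xi> p, \<tau> p))
    \<in> O[F](\<lambda>p. a p ^ 2)"
proof -
  obtain B where B: "\<And>x a t. t \<in> {0..T} \<Longrightarrow>
      \<bar>f (x + a, t) - (f (x, t) + pdx (dom_T T) f (x, t) * a)\<bar> \<le> B * a ^ 2"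
    using x_taylor_bound[of L 1 T f] assms(1-3) by (auto simp: numeral_2_eq_2)
  have "\<bar>(f (x - a, t) + f (x + a, t)) / 2 - f (x, t)\<bar> \<le> B * a ^ 2" if "t \<in> {0..T}" for x a t
    using B[OF that, of x a] B[OF that, of x "- a"] by (simp add: abs_le_iff field_simps)
  then show ?thesis
    using assms(4) by (intro bigoI[where c = B]) (auto elim!: eventually_mono)
qed

lemma central_difference_bigo:
  assumes "L > 0" and "Ck_on 3 (dom_T T) f" and "x_periodic L f"
    and "\<forall>\<^sub>F p in F. \<tau> p \<in> {0..T} \<and> a p \<noteq> 0"
  shows "(\<lambda>p. (f (\<xi> p + a p, \<tau> p) - f (\<xi> p - a p, \<tau> p)) / (2 * a p) - pdx (dom_T T) f (\<xi> p, \<tau> p))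
    \<in> O[F](\<lambda>p. a p ^ 2)"
proof -
  let ?f1 = "pdx (dom_T T) f" and ?f2 = "pdx (dom_T T) (pdx (dom_T T) f)"
  obtain B where B: "\<And>x a t. t \<in> {0..T} \<Longrightarrow>
      \<bar>f (x + a, t) - (f (x, t) + ?f1 (x, t) * a + ?f2 (x, t) * a ^ 2 / 2)\<bar> \<le> B * \<bar>a\<bar> ^ 3"
    using x_taylor_bound[of L 2 T f] assms(1-3) by (auto simp: numeral_3_eq_3 numeral_2_eq_2)
  have "\<bar>(f (x + a, t) - f (x - a, t)) / (2 * a) - ?f1 (x, t)\<bar> \<le> B * a ^ 2"
    if "t \<in> {0..T}" "a \<noteq> 0" for x a t
  proof -
    have "\<bar>f (x + a, t) - f (x - a, t) - 2 * a * ?f1 (x, t)\<bar> \<le> 2 * B * \<bar>a\<bar> ^ 3"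
      using B[OF that(1), of x a] B[OF that(1), of x "- a"] by (simp add: abs_le_iff field_simps)
    moreover have "(f (x + a, t) - f (x - a, t)) / (2 * a) - ?f1 (x, t)
        = (f (x + a, t) - f (x - a, t) - 2 * a * ?f1 (x, t)) / (2 * a)"
      using that(2) by (simp add: field_simps)
    ultimately show ?thesis
      using that(2) by (simp add: abs_mult divide_le_eq power3_eq_cube power2_eq_square
          mult_ac)
  qed
  then show ?thesis
    using assms(4) by (intro bigoI[where c = B]) (auto elim!: eventually_mono)
qed

lemma time_difference_bigo:
  assumes "L > 0" and "Ck_on 1 (dom_T T) f" and "x_periodic L f"
    and "\<forall>\<^sub>F p in F. \<tau> p \<in> {0..T} \<and> \<tau> p + \<delta> p \<in> {0..T}"
  shows "(\<lambda>p. f (\<xi> p, \<tau> p + \<delta> p) - f (\<xi> p, \<tau> p)) \<in> O[F](\<delta>)"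
proof -
  obtain B where B: "\<And>x t s. t \<in> {0..T} \<Longrightarrow> s \<in> {0..T} \<Longrightarrow> \<bar>f (x, s) - f (x, t)\<bar> \<le> B * \<bar>s - t\<bar>"
    using t_taylor_bound[of L 0 T f] assms(1-3) by auto
  show ?thesis
    using assms(4) by (intro bigoI[where c = B]) (auto elim!: eventually_mono intro!: order.trans[OF B])
qed

lemma time_quotient_bigo:
  assumes "L > 0" and "Ck_on 2 (dom_T T) f" and "x_periodic L f"
    and "\<forall>\<^sub>F p in F. \<tau> p \<in> {0..T} \<and> \<tau> p + \<delta> p \<in> {0..T} \<and> \<delta> p \<noteq> 0"
  shows "(\<lambda>p. (f (\<xi> p, \<tau> p + \<delta> p) - f (\<xi> p, \<tau> p)) / \<delta> p - pdt (dom_T T) f (\<xi> p, \<tau> p))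
    \<in> O[F](\<delta>)"
proof -
  obtain B where B: "\<And>x t s. t \<in> {0..T} \<Longrightarrow> s \<in> {0..T} \<Longrightarrow>
      \<bar>f (x, s) - (f (x, t) + pdt (dom_T T) f (x, t) * (s - t))\<bar> \<le> B * (s - t) ^ 2"
    using t_taylor_bound[of L 1 T f] assms(1-3) by (auto simp: numeral_2_eq_2)
  have "\<bar>(f (x, t + d) - f (x, t)) / d - pdt (dom_T T) f (x, t)\<bar> \<le> B * \<bar>d\<bar>"
    if "t \<in> {0..T}" "t + d \<in> {0..T}" "d \<noteq> 0" for x t d
  proof -
    let ?e = "f (x, t + d) - f (x, t) - pdt (dom_T T) f (x, t) * d"
    have "\<bar>?e\<bar> \<le> B * d ^ 2"
      using B[OF that(1,2), of x] by (simp add: algebra_simps)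
    then have "\<bar>?e\<bar> / \<bar>d\<bar> \<le> B * d ^ 2 / \<bar>d\<bar>"
      by (rule divide_right_mono) simp
    moreover have "B * d ^ 2 / \<bar>d\<bar> = B * \<bar>d\<bar>"
      using that(3) by (cases "d > 0") (auto simp: power2_eq_square)
    moreover have "(f (x, t + d) - f (x, t)) / d - pdt (dom_T T) f (x, t) = ?e / d"
      using that(3) by (simp add: field_simps)
    ultimately show ?thesis by simp
  qed
  then show ?thesis
    using assms(4) by (intro bigoI[where c = B]) (auto elim!: eventually_mono)
qed

section \<open>Consistency along a family of grids\<close>

(* ab - cd = (a - c)(b + d)/2 + (a + c)(b - d)/2, applied to the two edge fluxes. *)
lemma discrete_product_rule:
  fixes h pm p0 p1 vm v1 :: real
  assumes "h \<noteq> 0"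
  shows "((p0 + p1) / 2 * v1 - (pm + p0) / 2 * vm) / h
    = (vm + v1) / 2 * ((p1 - pm) / (2 * h)) + ((pm + p1) / 2 + p0) / 2 * ((v1 - vm) / h)"
  using assms by (simp add: field_simps)

(* The grid parameters (h, dt, k, l) are indexed by an arbitrary type and constrained only
   eventually along F, so that O[F] bounds are bounds uniform over all admissible grids when
   F is the principal filter of the admissible parameters. *)
locale scheme_consistency =
  fixes n :: nat and L T :: real and b :: "nat \<Rightarrow> nat \<Rightarrow> real"
    and P V :: "nat \<Rightarrow> real \<times> real \<Rightarrow> real"
    and F :: "'p filter" and h dt :: "'p \<Rightarrow> real" and k :: "'p \<Rightarrow> nat" and l :: "'p \<Rightarrow> int"
  assumes n: "n > 0" and L: "L > 0" and T: "T > 0"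
    and reg: "\<And>i. i < n \<Longrightarrow> Ck_on 3 (dom_T T) (P i) \<and> Ck_on 3 (dom_T T) (V i)"
    and per: "\<And>i. i < n \<Longrightarrow> x_periodic L (P i) \<and> x_periodic L (V i)"
    and pos: "\<And>i z. i < n \<Longrightarrow> z \<in> dom_T T \<Longrightarrow> P i z > 0"
    and eq1: "\<And>i z. i < n \<Longrightarrow> z \<in> dom_T T \<Longrightarrow>
       pdt (dom_T T) (P i) z + pdx (dom_T T) (\<lambda>w. P i w * V i w) z = 0"
    and eq2: "\<And>i z. i < n \<Longrightarrow> z \<in> dom_T T \<Longrightarrow>
       - (\<Sum>j<n. b i j * P j z * (V i z - V j z))
         = pdx (dom_T T) (\<lambda>w. ln (P i w)) z
           - (1 / (\<Sum>j<n. P j z)) * (\<Sum>j<n. P j z * pdx (dom_T T) (\<lambda>w. ln (P j w)) z)"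
    and eq3: "\<And>z. z \<in> dom_T T \<Longrightarrow> (\<Sum>j<n. P j z * V j z) = 0"
    and grid: "\<forall>\<^sub>F p in F. 0 < h p \<and> h p \<le> L \<and> 0 < dt p \<and> real (k p + 1) * dt p \<le> T"
begin

definition cell :: "'p \<Rightarrow> real" where "cell p = real_of_int (l p) * h p"

definition edge :: "'p \<Rightarrow> real" where "edge p = cell p + h p / 2"

definition tk :: "'p \<Rightarrow> real" where "tk p = real (k p) * dt p"

definition err :: "'p \<Rightarrow> real" where "err p = dt p + h p ^ 2"

definition Psum :: "real \<times> real \<Rightarrow> real" where "Psum z = (\<Sum>j<n. P j z)"

abbreviation hatP_at :: "nat \<Rightarrow> 'p \<Rightarrow> real" where
  "hatP_at j p \<equiv> hatP P (h p) (dt p) (k p) j (l p)"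

abbreviation DlogP_at :: "nat \<Rightarrow> 'p \<Rightarrow> real" where
  "DlogP_at j p \<equiv> DlogP P (h p) (dt p) (k p) j (l p)"

abbreviation Vnext_at :: "nat \<Rightarrow> 'p \<Rightarrow> real" where
  "Vnext_at j p \<equiv> Vgrid V (h p) (dt p) (Suc (k p)) j (l p)"

lemma grid_eventually:
  "\<forall>\<^sub>F p in F. 0 < h p \<and> 0 < dt p \<and> tk p \<in> {0..T} \<and> tk p + dt p \<in> {0..T}"
  using grid by eventually_elim (auto simp: tk_def algebra_simps)

lemma tk_in: "\<forall>\<^sub>F p in F. tk p \<in> {0..T}"
  and tk_next_in: "\<forall>\<^sub>F p in F. tk p + dt p \<in> {0..T}"
  using grid_eventually by (auto elim: eventually_mono)

lemma grid_bounds: "\<forall>\<^sub>F p in F. 0 \<le> dt p \<and> dt p \<le> T \<and> h p ^ 2 \<le> L ^ 2"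
  using grid
proof eventually_elim
  case (elim p)
  have "dt p \<le> real (k p + 1) * dt p" using elim by (simp add: algebra_simps)
  moreover have "h p ^ 2 \<le> L ^ 2" using elim by (auto intro: power_mono)
  ultimately show ?case using elim by linarith
qed

lemma dt_bigo_err: "dt \<in> O[F](err)"
  using grid_bounds by (intro bigoI[where c = 1]) (auto elim!: eventually_mono simp: err_def)

lemma err_bounded: "err \<in> O[F](\<lambda>_. 1)"
  using grid_bounds by (intro bigoI[where c = "T + L ^ 2"]) (auto elim!: eventually_mono simp: err_def)

lemma step_squared_bigo_err:
  assumes "\<forall>\<^sub>F p in F. \<bar>a p\<bar> \<le> h p"
  shows "(\<lambda>p. a p ^ 2) \<in> O[F](err)"
proof (intro bigoI[where c = 1])
  show "\<forall>\<^sub>F p in F. norm (a p ^ 2) \<le> 1 * norm (err p)"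
    using assms grid_bounds
  proof eventually_elim
    case (elim p)
    then have "a p ^ 2 \<le> h p ^ 2" by (metis abs_ge_zero power2_abs power_mono)
    then show ?case using elim by (simp add: err_def)
  qed
qed

lemma Ck_P: "i < n \<Longrightarrow> Ck_on 3 (dom_T T) (P i)"
  and Ck_V: "i < n \<Longrightarrow> Ck_on 3 (dom_T T) (V i)"
  and Ck_lnP: "i < n \<Longrightarrow> Ck_on 3 (dom_T T) (\<lambda>z. ln (P i z))"
  using reg pos by (auto intro: Ck_on_ln[OF T])

lemma per_P: "i < n \<Longrightarrow> x_periodic L (P i)"
  and per_V: "i < n \<Longrightarrow> x_periodic L (V i)"
  and per_lnP: "i < n \<Longrightarrow> x_periodic L (\<lambda>z. ln (P i z))"
  using per by (auto simp: x_periodic_def)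

lemma Ck_lnPx: "i < n \<Longrightarrow> Ck_on 2 (dom_T T) (pdx (dom_T T) (\<lambda>z. ln (P i z)))"
  using Ck_on_pdx[of 2 "dom_T T"] Ck_lnP by (simp del: Ck_on.simps)

lemma bounded_at:
  assumes "Ck_on m (dom_T T) f" and "x_periodic L f" and "\<forall>\<^sub>F p in F. \<tau> p \<in> {0..T}"
  shows "(\<lambda>p. f (\<xi> p, \<tau> p)) \<in> O[F](\<lambda>_. 1)"
  by (rule bigo_1_on_dom_T[OF L assms])

lemma time_step_approx:
  assumes "Ck_on 1 (dom_T T) f" and "x_periodic L f"
  shows "(\<lambda>p. f (\<xi> p, tk p + dt p) - f (\<xi> p, tk p)) \<in> O[F](err)"
proof -
  have "\<forall>\<^sub>F p in F. tk p \<in> {0..T} \<and> tk p + dt p \<in> {0..T}"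
    using grid_eventually by (auto elim: eventually_mono)
  then show ?thesis
    by (rule landau_o.big_trans[OF time_difference_bigo[OF L assms] dt_bigo_err])
qed

lemma time_quotient_approx:
  assumes "Ck_on 2 (dom_T T) f" and "x_periodic L f"
  shows "(\<lambda>p. (f (\<xi> p, tk p + dt p) - f (\<xi> p, tk p)) / dt p - pdt (dom_T T) f (\<xi> p, tk p))
    \<in> O[F](err)"
proof -
  have "\<forall>\<^sub>F p in F. tk p \<in> {0..T} \<and> tk p + dt p \<in> {0..T} \<and> dt p \<noteq> 0"
    using grid_eventually by (auto elim: eventually_mono)
  then show ?thesis
    by (rule landau_o.big_trans[OF time_quotient_bigo[OF L assms] dt_bigo_err])
qed

lemma average_approx:
  assumes "Ck_on 2 (dom_T T) f" and "x_periodic L f"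
    and "\<forall>\<^sub>F p in F. \<tau> p \<in> {0..T}" and "\<forall>\<^sub>F p in F. \<bar>a p\<bar> \<le> h p"
  shows "(\<lambda>p. (f (\<xi> p - a p, \<tau> p) + f (\<xi> p + a p, \<tau> p)) / 2 - f (\<xi> p, \<tau> p)) \<in> O[F](err)"
  by (rule landau_o.big_trans[OF average_bigo[OF L assms(1-3)] step_squared_bigo_err[OF assms(4)]])

lemma central_difference_approx:
  assumes "Ck_on 3 (dom_T T) f" and "x_periodic L f"
    and "\<forall>\<^sub>F p in F. \<tau> p \<in> {0..T} \<and> a p \<noteq> 0" and "\<forall>\<^sub>F p in F. \<bar>a p\<bar> \<le> h p"
  shows "(\<lambda>p. (f (\<xi> p + a p, \<tau> p) - f (\<xi> p - a p, \<tau> p)) / (2 * a p) - pdx (dom_T T) f (\<xi> p, \<tau> p))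
    \<in> O[F](err)"
  by (rule landau_o.big_trans[OF central_difference_bigo[OF L assms(1-3)]
        step_squared_bigo_err[OF assms(4)]])

lemma half_h_le_h: "\<forall>\<^sub>F p in F. \<bar>h p / 2\<bar> \<le> h p"
  using grid_eventually by (auto elim: eventually_mono)

lemma next_average_approx:
  assumes "Ck_on 2 (dom_T T) f" and "x_periodic L f"
  shows "(\<lambda>p. (f (\<xi> p - h p / 2, tk p + dt p) + f (\<xi> p + h p / 2, tk p + dt p)) / 2
    - f (\<xi> p, tk p)) \<in> O[F](err)"
proof -
  have "(\<lambda>p. (f (\<xi> p - h p / 2, tk p + dt p) + f (\<xi> p + h p / 2, tk p + dt p)) / 2
      - f (\<xi> p, tk p + dt p)) \<in> O[F](err)"
    by (rule average_approx[OF assms tk_next_in half_h_le_h])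
  moreover have "(\<lambda>p. f (\<xi> p, tk p + dt p) - f (\<xi> p, tk p)) \<in> O[F](err)"
    by (rule time_step_approx[OF Ck_on_mono[OF assms(1)] assms(2)]) simp
  ultimately show ?thesis
    by (auto dest: sum_in_bigo(1))
qed

lemma next_difference_approx:
  assumes f: "Ck_on 3 (dom_T T) f" and per: "x_periodic L f"
  shows "(\<lambda>p. (f (\<xi> p + h p / 2, tk p + dt p) - f (\<xi> p - h p / 2, tk p + dt p)) / h p
    - pdx (dom_T T) f (\<xi> p, tk p)) \<in> O[F](err)"
proof -
  have "\<forall>\<^sub>F p in F. (tk p + dt p \<in> {0..T} \<and> h p / 2 \<noteq> 0) \<and> \<bar>h p / 2\<bar> \<le> h p"
    using grid_eventually by (auto elim: eventually_mono)
  then have "(\<lambda>p. (f (\<xi> p + h p / 2, tk p + dt p) - f (\<xi> p - h p / 2, tk p + dt p)) / h p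
      - pdx (dom_T T) f (\<xi> p, tk p + dt p)) \<in> O[F](err)"
    using central_difference_approx[OF f per, of "\<lambda>p. tk p + dt p" "\<lambda>p. h p / 2"]
    by (simp add: eventually_conj_iff)
  moreover have "(\<lambda>p. pdx (dom_T T) f (\<xi> p, tk p + dt p) - pdx (dom_T T) f (\<xi> p, tk p)) \<in> O[F](err)"
    using time_step_approx[OF Ck_on_mono[OF Ck_on_pdx[OF f[unfolded numeral_3_eq_3]]]
        x_periodic_pdx[OF per]]
    by simp
  ultimately show ?thesis
    by (auto dest: sum_in_bigo(1))
qed

lemma hatP_eq: "hatP_at j p = (P j (edge p - h p / 2, tk p) + P j (edge p + h p / 2, tk p)) / 2"
  by (simp add: hatP_def Pgrid_def edge_def cell_def tk_def algebra_simps)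

lemma Vgrid_eq: "Vnext_at j p = V j (edge p, tk p + dt p)"
  by (simp add: Vgrid_def edge_def cell_def tk_def algebra_simps)

lemma DlogP_eq: "DlogP_at j p
    = (ln (P j (edge p + h p / 2, tk p + dt p)) - ln (P j (edge p - h p / 2, tk p + dt p))) / h p"
  by (simp add: DlogP_def Pgrid_def edge_def cell_def tk_def algebra_simps)

lemma hatP_approx: "j < n \<Longrightarrow> (\<lambda>p. hatP_at j p - P j (edge p, tk p)) \<in> O[F](err)"
  unfolding hatP_eq by (rule average_approx[OF Ck_on_mono[OF Ck_P] per_P tk_in half_h_le_h]) simp_all

lemma hatP_bounded: "j < n \<Longrightarrow> hatP_at j \<in> O[F](\<lambda>_. 1)"
  by (rule bigo_1_of_approx[OF hatP_approx bounded_at[OF Ck_P per_P tk_in] err_bounded])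

lemma Vgrid_approx: "j < n \<Longrightarrow> (\<lambda>p. Vnext_at j p - V j (edge p, tk p)) \<in> O[F](err)"
  unfolding Vgrid_eq by (rule time_step_approx[OF Ck_on_mono[OF Ck_V] per_V]) simp_all

lemma DlogP_approx:
  "j < n \<Longrightarrow> (\<lambda>p. DlogP_at j p - pdx (dom_T T) (\<lambda>z. ln (P j z)) (edge p, tk p)) \<in> O[F](err)"
  unfolding DlogP_eq by (rule next_difference_approx[OF Ck_lnP per_lnP])

lemma tau3_bigo: "(\<lambda>p. tau3 n P V (h p) (dt p) (k p) (l p)) \<in> O[F](err)"
proof -
  have "(\<lambda>p. \<Sum>j<n. hatP_at j p * Vnext_at j p - P j (edge p, tk p) * V j (edge p, tk p))
      \<in> O[F](err)"
  proof (intro big_sum_in_bigo bigo_mult_diff)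
    fix j assume "j \<in> {..<n}"
    then have j: "j < n" by simp
    show "(\<lambda>p. hatP_at j p - P j (edge p, tk p)) \<in> O[F](err)"
      by (rule hatP_approx[OF j])
    show "(\<lambda>p. Vnext_at j p - V j (edge p, tk p)) \<in> O[F](err)"
      by (rule Vgrid_approx[OF j])
    show "hatP_at j \<in> O[F](\<lambda>_. 1)"
      by (rule hatP_bounded[OF j])
    show "(\<lambda>p. V j (edge p, tk p)) \<in> O[F](\<lambda>_. 1)"
      by (rule bounded_at[OF Ck_V[OF j] per_V[OF j] tk_in])
  qed
  moreover have "\<forall>\<^sub>F p in F. (\<Sum>j<n. P j (edge p, tk p) * V j (edge p, tk p)) = 0"
    using tk_in by eventually_elim (simp add: eq3 dom_T_def)
  ultimately show ?thesis
    by (elim landau_o.big.in_cong[THEN iffD1, rotated] eventually_mono)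
      (simp add: tau3_def sum_subtractf)
qed

lemma tau1_eq: "tau1 P V (h p) (dt p) (k p) i (l p)
    = (P i (cell p, tk p + dt p) - P i (cell p, tk p)) / dt p
      + ((P i (cell p, tk p) + P i (cell p + h p, tk p)) / 2 * V i (cell p + h p / 2, tk p + dt p)
        - (P i (cell p - h p, tk p) + P i (cell p, tk p)) / 2 * V i (cell p - h p / 2, tk p + dt p))
        / h p"
proof -
  have grid_points:
    "real_of_int (l p + 1) * h p = cell p + h p" "real_of_int (l p - 1) * h p = cell p - h p"
    "(real_of_int (l p) + 1 / 2) * h p = cell p + h p / 2"
    "(real_of_int (l p - 1) + 1 / 2) * h p = cell p - h p / 2"
    "real (k p + 1) * dt p = tk p + dt p"
    by (simp_all add: cell_def tk_def algebra_simps)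
  show ?thesis
    unfolding tau1_def hatP_def Pgrid_def Vgrid_def grid_points diff_add_cancel
    by (simp only: cell_def[symmetric] tk_def[symmetric])
qed

lemma flux_difference_approx:
  assumes f: "Ck_on 3 (dom_T T) f" "x_periodic L f" and g: "Ck_on 3 (dom_T T) g" "x_periodic L g"
  shows "(\<lambda>p. ((f (cell p, tk p) + f (cell p + h p, tk p)) / 2 * g (cell p + h p / 2, tk p + dt p)
      - (f (cell p - h p, tk p) + f (cell p, tk p)) / 2 * g (cell p - h p / 2, tk p + dt p)) / h p
      - (g (cell p, tk p) * pdx (dom_T T) f (cell p, tk p)
        + f (cell p, tk p) * pdx (dom_T T) g (cell p, tk p)))
    \<in> O[F](err)"
proof -
  define f0 where "f0 p = f (cell p, tk p)" for p
  define g0 where "g0 p = g (cell p, tk p)" for p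
  define M where
    "M p = (g (cell p - h p / 2, tk p + dt p) + g (cell p + h p / 2, tk p + dt p)) / 2" for p
  define D where "D p = (f (cell p + h p, tk p) - f (cell p - h p, tk p)) / (2 * h p)" for p
  define A where "A p = ((f (cell p - h p, tk p) + f (cell p + h p, tk p)) / 2 + f0 p) / 2" for p
  define E where
    "E p = (g (cell p + h p / 2, tk p + dt p) - g (cell p - h p / 2, tk p + dt p)) / h p" for p
  have step_h: "\<forall>\<^sub>F p in F. (tk p \<in> {0..T} \<and> h p \<noteq> 0) \<and> \<bar>h p\<bar> \<le> h p"
    using grid_eventually by (auto elim: eventually_mono)
  have M: "(\<lambda>p. M p - g0 p) \<in> O[F](err)"
    unfolding M_def g0_def by (rule next_average_approx[OF Ck_on_mono[OF g(1)] g(2)]) simp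
  have D: "(\<lambda>p. D p - pdx (dom_T T) f (cell p, tk p)) \<in> O[F](err)"
    unfolding D_def using step_h by (intro central_difference_approx[OF f]) (auto elim: eventually_mono)
  have "(\<lambda>p. (f (cell p - h p, tk p) + f (cell p + h p, tk p)) / 2 - f0 p) \<in> O[F](err)"
    unfolding f0_def using step_h
    by (intro average_approx[OF Ck_on_mono[OF f(1)] f(2)]) (auto elim: eventually_mono)
  then have A: "(\<lambda>p. A p - f0 p) \<in> O[F](err)"
    by (simp add: A_def field_simps)
  have E: "(\<lambda>p. E p - pdx (dom_T T) g (cell p, tk p)) \<in> O[F](err)"
    unfolding E_def by (rule next_difference_approx[OF g])
  have bounded: "g0 \<in> O[F](\<lambda>_. 1)" "f0 \<in> O[F](\<lambda>_. 1)"
    "(\<lambda>p. pdx (dom_T T) f (cell p, tk p)) \<in> O[F](\<lambda>_. 1)"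
    "(\<lambda>p. pdx (dom_T T) g (cell p, tk p)) \<in> O[F](\<lambda>_. 1)"
    unfolding g0_def f0_def
    using bounded_at[OF g tk_in] bounded_at[OF f tk_in]
      bounded_at[OF Ck_on_pdx[OF f(1)[unfolded numeral_3_eq_3]] x_periodic_pdx[OF f(2)] tk_in]
      bounded_at[OF Ck_on_pdx[OF g(1)[unfolded numeral_3_eq_3]] x_periodic_pdx[OF g(2)] tk_in]
    by simp_all
  have "(\<lambda>p. (M p * D p - g0 p * pdx (dom_T T) f (cell p, tk p))
      + (A p * E p - f0 p * pdx (dom_T T) g (cell p, tk p))) \<in> O[F](err)"
    using bigo_1_of_approx[OF M bounded(1) err_bounded] bigo_1_of_approx[OF A bounded(2) err_bounded]
    by (intro sum_in_bigo(1) bigo_mult_diff M D A E bounded)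
  moreover have "\<forall>\<^sub>F p in F.
      (M p * D p - g0 p * pdx (dom_T T) f (cell p, tk p))
      + (A p * E p - f0 p * pdx (dom_T T) g (cell p, tk p))
    = ((f (cell p, tk p) + f (cell p + h p, tk p)) / 2 * g (cell p + h p / 2, tk p + dt p)
      - (f (cell p - h p, tk p) + f (cell p, tk p)) / 2 * g (cell p - h p / 2, tk p + dt p)) / h p
      - (g (cell p, tk p) * pdx (dom_T T) f (cell p, tk p)
        + f (cell p, tk p) * pdx (dom_T T) g (cell p, tk p))"
    using step_h
  proof eventually_elim
    case (elim p)
    then have "h p \<noteq> 0" by simp
    then show ?case
      unfolding discrete_product_rule[OF \<open>h p \<noteq> 0\<close>] M_def D_def A_def E_def f0_def g0_def
      by (simp add: algebra_simps)
  qed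
  ultimately show ?thesis
    by (rule landau_o.big.in_cong[THEN iffD1, rotated])
qed

lemma differentiable_P: "i < n \<Longrightarrow> z \<in> dom_T T \<Longrightarrow> P i differentiable (at z within dom_T T)"
  and differentiable_V: "i < n \<Longrightarrow> z \<in> dom_T T \<Longrightarrow> V i differentiable (at z within dom_T T)"
  using Ck_on_mono[OF Ck_P, of i "Suc 0"] Ck_on_mono[OF Ck_V, of i "Suc 0"] by simp_all

lemma tau1_bigo:
  assumes i: "i < n"
  shows "(\<lambda>p. tau1 P V (h p) (dt p) (k p) i (l p)) \<in> O[F](err)"
proof -
  let ?Q = "\<lambda>p. (P i (cell p, tk p + dt p) - P i (cell p, tk p)) / dt p
      - pdt (dom_T T) (P i) (cell p, tk p)"
  let ?flux = "\<lambda>p. ((P i (cell p, tk p) + P i (cell p + h p, tk p)) / 2 * V i (cell p + h p / 2, tk p + dt p)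
      - (P i (cell p - h p, tk p) + P i (cell p, tk p)) / 2 * V i (cell p - h p / 2, tk p + dt p)) / h p
      - (V i (cell p, tk p) * pdx (dom_T T) (P i) (cell p, tk p)
        + P i (cell p, tk p) * pdx (dom_T T) (V i) (cell p, tk p))"
  have "?Q \<in> O[F](err)"
    by (rule time_quotient_approx[OF Ck_on_mono[OF Ck_P[OF i]] per_P[OF i]]) simp
  moreover have "?flux \<in> O[F](err)"
    by (rule flux_difference_approx[OF Ck_P[OF i] per_P[OF i] Ck_V[OF i] per_V[OF i]])
  ultimately have "(\<lambda>p. ?Q p + ?flux p) \<in> O[F](err)"
    by (rule sum_in_bigo(1))
  moreover have "\<forall>\<^sub>F p in F. tau1 P V (h p) (dt p) (k p) i (l p) = ?Q p + ?flux p"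
    using tk_in
  proof eventually_elim
    case (elim p)
    then have z: "(cell p, tk p) \<in> dom_T T" by (simp add: dom_T_def)
    from eq1[OF i z] pdx_mult[OF T z differentiable_P[OF i z] differentiable_V[OF i z]]
    show ?case by (simp add: tau1_eq algebra_simps)
  qed
  ultimately show ?thesis
    by (elim landau_o.big.in_cong[THEN iffD1, rotated] eventually_mono) simp
qed

lemma Psum_pos: "z \<in> dom_T T \<Longrightarrow> Psum z > 0"
  unfolding Psum_def using n pos by (intro sum_pos) auto

lemma inverse_Psum_bounded:
  assumes "\<forall>\<^sub>F p in F. \<tau> p \<in> {0..T}"
  shows "(\<lambda>p. 1 / Psum (\<xi> p, \<tau> p)) \<in> O[F](\<lambda>_. 1)"
proof (rule bounded_at[where m = 0 and \<xi> = \<xi>, OF _ _ assms])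
  have "continuous_on (dom_T T) Psum"
    unfolding Psum_def using Ck_on_mono[OF Ck_P, of _ 0] by (intro continuous_on_sum) simp
  then show "Ck_on 0 (dom_T T) (\<lambda>z. 1 / Psum z)"
    unfolding Ck_on.simps using Psum_pos
    by (intro continuous_on_divide continuous_on_const) (auto simp: less_imp_neq[symmetric])
  show "x_periodic L (\<lambda>z. 1 / Psum z)"
    using per_P by (simp add: x_periodic_def Psum_def)
qed

(* The edge average of the total density is at least half its value at either neighbouring
   cell centre, so its reciprocal is bounded by that of the continuous density. *)
lemma inverse_hatP_sum_bounded: "(\<lambda>p. 1 / (\<Sum>j<n. hatP_at j p)) \<in> O[F](\<lambda>_. 1)"
proof -
  have "(\<lambda>p. 1 / (\<Sum>j<n. hatP_at j p)) \<in> O[F](\<lambda>p. 1 / Psum (edge p - h p / 2, tk p))"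
  proof (intro bigoI[where c = 2])
    show "\<forall>\<^sub>F p in F. norm (1 / (\<Sum>j<n. hatP_at j p)) \<le> 2 * norm (1 / Psum (edge p - h p / 2, tk p))"
      using tk_in
    proof eventually_elim
      case (elim p)
      have "(\<Sum>j<n. hatP_at j p) = (Psum (edge p - h p / 2, tk p) + Psum (edge p + h p / 2, tk p)) / 2"
        by (simp add: hatP_eq Psum_def sum.distrib flip: sum_divide_distrib)
      moreover have "Psum (edge p - h p / 2, tk p) > 0" "Psum (edge p + h p / 2, tk p) > 0"
        using elim by (auto intro: Psum_pos simp: dom_T_def)
      ultimately show ?case by (simp add: field_simps)
    qed
  qed
  then show ?thesis
    by (rule landau_o.big_trans[OF _ inverse_Psum_bounded[OF tk_in]])
qed

lemma mean_DlogP_approx: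
  "(\<lambda>p. 1 / (\<Sum>j<n. hatP_at j p) * (\<Sum>j<n. hatP_at j p * DlogP_at j p)
      - 1 / Psum (edge p, tk p)
        * (\<Sum>j<n. P j (edge p, tk p) * pdx (dom_T T) (\<lambda>z. ln (P j z)) (edge p, tk p)))
    \<in> O[F](err)"
proof (rule bigo_mult_diff)
  have "(\<lambda>p. (\<Sum>j<n. hatP_at j p) - Psum (edge p, tk p)) \<in> O[F](err)"
    unfolding Psum_def sum_subtractf[symmetric] by (intro big_sum_in_bigo hatP_approx) simp
  moreover have "\<forall>\<^sub>F p in F. (\<Sum>j<n. hatP_at j p) \<noteq> 0 \<and> Psum (edge p, tk p) \<noteq> 0"
    using tk_in
  proof eventually_elim
    case (elim p)
    then have "P j (x, tk p) > 0" if "j < n" for j x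
      using pos[OF that] by (simp add: dom_T_def)
    then have "(\<Sum>j<n. hatP_at j p) > 0" "Psum (edge p, tk p) > 0"
      unfolding hatP_eq Psum_def using n by (auto intro!: sum_pos add_pos_pos)
    then show ?case by simp
  qed
  ultimately show "(\<lambda>p. 1 / (\<Sum>j<n. hatP_at j p) - 1 / Psum (edge p, tk p)) \<in> O[F](err)"
    by (rule bigo_inverse_diff[OF _ inverse_hatP_sum_bounded inverse_Psum_bounded[OF tk_in]])
  show "(\<lambda>p. 1 / (\<Sum>j<n. hatP_at j p)) \<in> O[F](\<lambda>_. 1)"
    by (rule inverse_hatP_sum_bounded)
  show "(\<lambda>p. (\<Sum>j<n. hatP_at j p * DlogP_at j p)
      - (\<Sum>j<n. P j (edge p, tk p) * pdx (dom_T T) (\<lambda>z. ln (P j z)) (edge p, tk p))) \<in> O[F](err)"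
    unfolding sum_subtractf[symmetric]
    by (intro big_sum_in_bigo bigo_mult_diff hatP_approx DlogP_approx hatP_bounded
        bounded_at[OF Ck_lnPx x_periodic_pdx[OF per_lnP] tk_in]) simp_all
  show "(\<lambda>p. \<Sum>j<n. P j (edge p, tk p) * pdx (dom_T T) (\<lambda>z. ln (P j z)) (edge p, tk p))
      \<in> O[F](\<lambda>_. 1)"
    by (intro big_sum_in_bigo landau_o.big_1_mult bounded_at[OF Ck_P per_P tk_in]
        bounded_at[OF Ck_lnPx x_periodic_pdx[OF per_lnP] tk_in]) simp_all
qed

lemma friction_approx:
  assumes i: "i < n"
  shows "(\<lambda>p. (\<Sum>j<n. b i j * hatP_at j p * (Vnext_at i p - Vnext_at j p))
      - (\<Sum>j<n. b i j * P j (edge p, tk p) * (V i (edge p, tk p) - V j (edge p, tk p))))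
    \<in> O[F](err)"
proof -
  have "(\<lambda>p. b i j * hatP_at j p * (Vnext_at i p - Vnext_at j p)
      - b i j * P j (edge p, tk p) * (V i (edge p, tk p) - V j (edge p, tk p))) \<in> O[F](err)"
    if j: "j < n" for j
  proof (rule bigo_mult_diff)
    show "(\<lambda>p. b i j * hatP_at j p - b i j * P j (edge p, tk p)) \<in> O[F](err)"
      using landau_o.big_1_mult[OF hatP_approx[OF j] const_in_bigo_1[of "b i j"]]
      by (simp add: algebra_simps)
    show "(\<lambda>p. Vnext_at i p - Vnext_at j p - (V i (edge p, tk p) - V j (edge p, tk p))) \<in> O[F](err)"
      using sum_in_bigo(2)[OF Vgrid_approx[OF i] Vgrid_approx[OF j]] by (simp add: algebra_simps)
    show "(\<lambda>p. b i j * hatP_at j p) \<in> O[F](\<lambda>_. 1)"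
      using landau_o.big_1_mult[OF hatP_bounded[OF j] const_in_bigo_1[of "b i j"]]
      by (simp add: mult.commute)
    show "(\<lambda>p. V i (edge p, tk p) - V j (edge p, tk p)) \<in> O[F](\<lambda>_. 1)"
      by (intro sum_in_bigo bounded_at[OF Ck_V per_V tk_in] i j)
  qed
  then show ?thesis
    unfolding sum_subtractf[symmetric] by (intro big_sum_in_bigo) simp
qed

lemma tau2_bigo:
  assumes i: "i < n"
  shows "(\<lambda>p. tau2 n b P V (h p) (dt p) (k p) i (l p)) \<in> O[F](err)"
proof -
  let ?G = "\<lambda>j p. pdx (dom_T T) (\<lambda>z. ln (P j z)) (edge p, tk p)"
  let ?mean = "\<lambda>p. 1 / (\<Sum>j<n. hatP_at j p) * (\<Sum>j<n. hatP_at j p * DlogP_at j p)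
      - 1 / Psum (edge p, tk p) * (\<Sum>j<n. P j (edge p, tk p) * ?G j p)"
  let ?friction = "\<lambda>p. (\<Sum>j<n. b i j * hatP_at j p * (Vnext_at i p - Vnext_at j p))
      - (\<Sum>j<n. b i j * P j (edge p, tk p) * (V i (edge p, tk p) - V j (edge p, tk p)))"
  have "(\<lambda>p. (DlogP_at i p - ?G i p) - ?mean p + ?friction p) \<in> O[F](err)"
    by (intro sum_in_bigo DlogP_approx mean_DlogP_approx friction_approx i)
  moreover have "\<forall>\<^sub>F p in F. tau2 n b P V (h p) (dt p) (k p) i (l p)
      = (DlogP_at i p - ?G i p) - ?mean p + ?friction p"
    using tk_in
  proof eventually_elim
    case (elim p)
    then have "(edge p, tk p) \<in> dom_T T" by (simp add: dom_T_def)
    from eq2[OF i this] show ?case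
      by (simp add: tau2_def Psum_def)
  qed
  ultimately show ?thesis
    by (elim landau_o.big.in_cong[THEN iffD1, rotated] eventually_mono) simp
qed

lemma truncation_error_bound:
  "\<exists>C>0. \<forall>\<^sub>F p in F. \<forall>i<n.
     \<bar>tau1 P V (h p) (dt p) (k p) i (l p)\<bar> \<le> C * (dt p + h p ^ 2)
   \<and> \<bar>tau2 n b P V (h p) (dt p) (k p) i (l p)\<bar> \<le> C * (dt p + h p ^ 2)
   \<and> \<bar>tau3 n P V (h p) (dt p) (k p) (l p)\<bar> \<le> C * (dt p + h p ^ 2)"
proof -
  define S where "S p = (\<Sum>i<n. \<bar>tau1 P V (h p) (dt p) (k p) i (l p)\<bar>
      + \<bar>tau2 n b P V (h p) (dt p) (k p) i (l p)\<bar>) + \<bar>tau3 n P V (h p) (dt p) (k p) (l p)\<bar>" for p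
  have "S \<in> O[F](err)"
    unfolding S_def using tau1_bigo tau2_bigo tau3_bigo by (intro sum_in_bigo big_sum_in_bigo) simp_all
  then obtain C where "C > 0" and C: "\<forall>\<^sub>F p in F. \<bar>S p\<bar> \<le> C * \<bar>err p\<bar>"
    by (elim landau_o.bigE) simp
  have parts: "\<bar>tau1 P V (h p) (dt p) (k p) i (l p)\<bar> + \<bar>tau2 n b P V (h p) (dt p) (k p) i (l p)\<bar>
      + \<bar>tau3 n P V (h p) (dt p) (k p) (l p)\<bar> \<le> S p" if "i < n" for i p
    unfolding S_def by (intro add_right_mono member_le_sum) (use that in auto)
  have "\<forall>\<^sub>F p in F. \<forall>i<n.
     \<bar>tau1 P V (h p) (dt p) (k p) i (l p)\<bar> \<le> C * (dt p + h p ^ 2)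
   \<and> \<bar>tau2 n b P V (h p) (dt p) (k p) i (l p)\<bar> \<le> C * (dt p + h p ^ 2)
   \<and> \<bar>tau3 n P V (h p) (dt p) (k p) (l p)\<bar> \<le> C * (dt p + h p ^ 2)"
    using C grid_eventually
  proof eventually_elim
    case (elim p)
    then have "S p \<le> C * (dt p + h p ^ 2)" by (simp add: err_def)
    then show ?case
      using parts[of _ p] by (smt (verit) abs_ge_zero)
  qed
  then show ?thesis using \<open>C > 0\<close> by blast
qed

end

theorem lemma2p5:
  fixes n :: nat and L T :: real and b :: "nat \<Rightarrow> nat \<Rightarrow> real"
    and P V :: "nat \<Rightarrow> real \<times> real \<Rightarrow> real"
  assumes n: "n \<ge> 2" and L: "L > 0" and T: "T > 0"
    and reg: "\<And>i. i < n \<Longrightarrow> Ck_on 3 (dom_T T) (P i) \<and> Ck_on 3 (dom_T T) (V i)"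
    and per: "\<And>i. i < n \<Longrightarrow> x_periodic L (P i) \<and> x_periodic L (V i)"
    and pos: "\<And>i z. i < n \<Longrightarrow> z \<in> dom_T T \<Longrightarrow> P i z > 0"
    and eq1: "\<And>i z. i < n \<Longrightarrow> z \<in> dom_T T \<Longrightarrow>
       pdt (dom_T T) (P i) z + pdx (dom_T T) (\<lambda>w. P i w * V i w) z = 0"
    and eq2: "\<And>i z. i < n \<Longrightarrow> z \<in> dom_T T \<Longrightarrow>
       - (\<Sum>j<n. b i j * P j z * (V i z - V j z))
         = pdx (dom_T T) (\<lambda>w. ln (P i w)) z
           - (1 / (\<Sum>j<n. P j z)) * (\<Sum>j<n. P j z * pdx (dom_T T) (\<lambda>w. ln (P j w)) z)"
    and eq3: "\<And>z. z \<in> dom_T T \<Longrightarrow> (\<Sum>j<n. P j z * V j z) = 0"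
    and init: "\<And>x. (\<Sum>j<n. P j (x, 0)) = 1"
  shows "\<exists>C>0. \<forall>(N::nat) dt (k::nat) i (l::int).
           N \<ge> 1 \<longrightarrow> dt > 0 \<longrightarrow> real (k + 1) * dt \<le> T \<longrightarrow> i < n \<longrightarrow>
           (let h = L / real N in
              \<bar>tau1 P V h dt k i l\<bar> \<le> C * (dt + h^2)
            \<and> \<bar>tau2 n b P V h dt k i l\<bar> \<le> C * (dt + h^2)
            \<and> \<bar>tau3 n P V h dt k l\<bar> \<le> C * (dt + h^2))"
proof -
  define A :: "(nat \<times> real \<times> nat \<times> int) set"
    where "A = {(N, d, m, j). 1 \<le> N \<and> 0 < d \<and> real (m + 1) * d \<le> T}"
  interpret scheme_consistency n L T b P V "principal A" "\<lambda>(N, _, _, _). L / real N"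
    "\<lambda>(_, d, _, _). d" "\<lambda>(_, _, m, _). m" "\<lambda>(_, _, _, j). j"
    using n L T reg per pos eq1 eq2 eq3
    by unfold_locales (auto simp: eventually_principal A_def field_simps)
  obtain C where "C > 0" and "\<And>N d m j i. 1 \<le> N \<Longrightarrow> 0 < d \<Longrightarrow> real (m + 1) * d \<le> T \<Longrightarrow> i < n \<Longrightarrow>
      \<bar>tau1 P V (L / real N) d m i j\<bar> \<le> C * (d + (L / real N) ^ 2)
    \<and> \<bar>tau2 n b P V (L / real N) d m i j\<bar> \<le> C * (d + (L / real N) ^ 2)
    \<and> \<bar>tau3 n P V (L / real N) d m j\<bar> \<le> C * (d + (L / real N) ^ 2)"
    using truncation_error_bound unfolding eventually_principal A_def by auto
  then show ?thesis by (auto simp: Let_def)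
qed

end
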